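(* Let $k$ and $r$ be positive integers such that $r \mid k$ and $k \ge 2r$. Let $\chi : \{1, 2, \ldots, rk-2r+1\} \to \{0,1\}$ be a 2-coloring such that $\chi(1) = 0$ and, if $r \ge 2$, $\chi(r-1) = 0$. Then there exists a solution $(\hat{x}_1, \ldots, \hat{x}_k)$ of the equation $x_1 + \cdots + x_{k-1} = x_k$ with all $\hat{x}_i \in \{1, \ldots, rk-2r+1\}$ such that $\sum_{i=1}^k \chi(\hat{x}_i) \equiv 0 \pmod r$.
   Context: Solutions of the equation $x_1 + \cdots + x_{k-1} = x_k$ are taken in positive integers. A solution $(\hat{x}_1,\ldots,\hat{x}_k)$ is called $r$-zero-sum under $\chi$ if $\sum_{i=1}^k \chi(\hat{x}_i) \equiv 0 \pmod r$. *)

theory Defs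
  imports Main
begin

end

theory Submission
  imports Defs
begin

(*
  Every solution used has the form: m copies of a, n copies of b, padded with ones (of colour 0)
  to k - 1 summands, followed by their sum.  If r divides chi(k - 1), the all-ones solution works.
  Otherwise chi(k - 1) = 1 and r >= 2; let t be the least number of colour 1.  If t >= 3, the
  number p = (k - 1) + (r - 1)(t - 1) is the sum of r - 1 copies of t (colour sum r together with
  chi p = 1) and also of r - 1 copies each of t - 1 and 2 (colour sum 0 together with chi p = 0).
  If t = 2, then r <> 3 since chi(r - 1) = 0, and T = 2k + r - 5 is the sum of k - 1 and r - 2 twos
  (colour sum r if chi T = 1), and of k - r twos and two copies of r - 1, or of k - 2 twos if r = 2
  (colour sum k - r or k - 2, divisible by r since r divides k, if chi T = 0).
*)

definition zero_sum_solvable :: "nat \<Rightarrow> nat \<Rightarrow> nat \<Rightarrow> (nat \<Rightarrow> nat) \<Rightarrow> bool" where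
  "zero_sum_solvable r k N \<chi> \<longleftrightarrow>
     (\<exists>x. (\<forall>i\<in>{1..k}. x i \<in> {1..N}) \<and> (\<Sum>i=1..k-1. x i) = x k
          \<and> (\<Sum>i=1..k. \<chi> (x i)) mod r = 0)"

lemma sum_atLeast1_nth_eq_sum_list:
  "(\<Sum>i=1..length xs. f (xs ! (i - 1))) = (\<Sum>y\<leftarrow>xs. f y)"
  by (simp add: sum.atLeast1_atMost_eq sum_list_sum_nth atLeast0LessThan)

lemma zero_sum_solvable_of_summands:
  fixes xs :: "nat list"
  assumes "length xs = k - 1" and "set xs \<subseteq> {1..N}" and "sum_list xs \<in> {1..N}"
    and "(sum_list (map \<chi> xs) + \<chi> (sum_list xs)) mod r = 0"
  shows "zero_sum_solvable r k N \<chi>"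
proof -
  define x where "x i = (if i < k then xs ! (i - 1) else sum_list xs)" for i
  have "0 < length xs"
    using assms(3) by (cases xs) auto
  then have k: "k = length xs + 1"
    using assms(1) by arith
  have summands: "(\<Sum>i=1..k-1. f (x i)) = (\<Sum>y\<leftarrow>xs. f y)" for f :: "nat \<Rightarrow> nat"
  proof -
    have "(\<Sum>i=1..k-1. f (x i)) = (\<Sum>i=1..length xs. f (xs ! (i - 1)))"
      using k by (intro sum.cong) (auto simp: x_def)
    also have "\<dots> = (\<Sum>y\<leftarrow>xs. f y)"
      by (rule sum_atLeast1_nth_eq_sum_list)
    finally show ?thesis .
  qed
  have "x k = sum_list xs"
    by (simp add: x_def)
  moreover have "x i \<in> {1..N}" if "i \<in> {1..k}" for i
  proof (cases "i < k")
    case True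
    then have "xs ! (i - 1) \<in> set xs"
      using that k by simp
    then show ?thesis
      using True assms(2) by (auto simp: x_def)
  qed (use assms(3) in \<open>simp add: x_def\<close>)
  moreover have "(\<Sum>i=1..k. \<chi> (x i)) = (\<Sum>i=1..k-1. \<chi> (x i)) + \<chi> (x k)"
    using k by simp
  ultimately show ?thesis
    unfolding zero_sum_solvable_def
    using summands[of id] summands[of \<chi>] assms(4) by (intro exI[of _ x]) auto
qed

lemma zero_sum_solvable_padded_by_ones:
  assumes "m + n \<le> k - 1" and "a \<in> {1..N}" and "b \<in> {1..N}" and "T \<in> {1..N}"
    and "T = m * a + n * b + (k - 1 - m - n)"
    and "\<chi> 1 = 0" and "(m * \<chi> a + n * \<chi> b + \<chi> T) mod r = 0"
  shows "zero_sum_solvable r k N \<chi>"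
proof -
  define xs where "xs = replicate m a @ replicate n b @ replicate (k - 1 - m - n) 1"
  have "sum_list xs = T" and "sum_list (map \<chi> xs) = m * \<chi> a + n * \<chi> b"
    using assms(5,6) by (simp_all add: xs_def sum_list_replicate)
  then show ?thesis
    using assms by (intro zero_sum_solvable_of_summands[of xs]) (auto simp: xs_def)
qed

context
  fixes r k :: nat and \<chi> :: "nat \<Rightarrow> nat"
  assumes r_pos: "0 < r" and r_dvd_k: "r dvd k" and k_ge: "2 * r \<le> k"
    and binary: "\<forall>n\<in>{1..r*k - 2*r + 1}. \<chi> n \<in> {0, 1}"
    and chi_1: "\<chi> 1 = 0"
begin

lemma range_bound_eq: "r*k - 2*r + 1 = (r - 1) * (k - 2) + (k - 1)"
  using r_pos k_ge by (cases r) (auto simp: algebra_simps)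

lemma pred_k_mem_range: "k - 1 \<in> {1..r*k - 2*r + 1}"
  using r_pos k_ge unfolding range_bound_eq by auto

lemma chi_binary: "n \<in> {1..r*k - 2*r + 1} \<Longrightarrow> \<chi> n = 0 \<or> \<chi> n = 1"
  using binary by blast

lemma zero_sum_solvable_if_dvd_chi_pred_k:
  assumes "r dvd \<chi> (k - 1)"
  shows "zero_sum_solvable r k (r*k - 2*r + 1) \<chi>"
  using assms chi_1 pred_k_mem_range
  by (intro zero_sum_solvable_padded_by_ones[of 0 0 k 1 _ 1 "k - 1"]) auto

lemma zero_sum_solvable_if_least_nonzero_ge_3:
  assumes "3 \<le> t" and "t \<le> k - 1" and "\<chi> t = 1" and "\<And>v. 1 \<le> v \<Longrightarrow> v < t \<Longrightarrow> \<chi> v = 0"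
  shows "zero_sum_solvable r k (r*k - 2*r + 1) \<chi>"
proof -
  define p where "p = (k - 1) + (r - 1) * (t - 1)"
  have "(r - 1) * (t - 1) \<le> (r - 1) * (k - 2)"
    using assms(2) by (intro mult_le_mono) auto
  then have p: "p \<in> {1..r*k - 2*r + 1}"
    using k_ge r_pos unfolding p_def range_bound_eq atLeastAtMost_iff by linarith
  have t: "t \<in> {1..r*k - 2*r + 1}"
    using assms(1,2) pred_k_mem_range by auto
  from chi_binary[OF p] consider "\<chi> p = 0" | "\<chi> p = 1"
    by auto
  then show ?thesis
  proof cases
    case 1
    show ?thesis
    proof (rule zero_sum_solvable_padded_by_ones[of "r - 1" "r - 1" k "t - 1" _ 2 p])
      show "p = (r - 1) * (t - 1) + (r - 1) * 2 + (k - 1 - (r - 1) - (r - 1))"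
        using k_ge unfolding p_def by (simp add: algebra_simps)
    qed (use 1 assms p t k_ge chi_1 in auto)
  next
    case 2
    show ?thesis
    proof (rule zero_sum_solvable_padded_by_ones[of "r - 1" 0 k t _ 1 p])
      have "(r - 1) * t = (r - 1) * (t - 1) + (r - 1)"
        using assms(1) by (cases t) auto
      then show "p = (r - 1) * t + 0 * 1 + (k - 1 - (r - 1) - 0)"
        using k_ge unfolding p_def by linarith
      show "((r - 1) * \<chi> t + 0 * \<chi> 1 + \<chi> p) mod r = 0"
        using 2 assms(3) r_pos by simp
    qed (use assms p t k_ge chi_1 in auto)
  qed
qed

lemma two_k_plus_r_minus_5_mem_range:
  assumes "2 \<le> r"
  shows "2*k + r - 5 \<in> {1..r*k - 2*r + 1}"
proof -
  have "r - 1 = Suc (r - 2)"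
    using assms by simp
  then have "(r - 1) * (k - 2) = (r - 2) * (k - 2) + (k - 2)"
    by simp
  moreover have "(r - 2) * 1 \<le> (r - 2) * (k - 2)"
    using k_ge assms by (intro mult_le_mono) auto
  ultimately show ?thesis
    using k_ge assms unfolding range_bound_eq atLeastAtMost_iff by linarith
qed

lemma zero_sum_solvable_if_chi_2_and_chi_0:
  assumes "\<chi> 2 = 1" and "\<chi> (2*k + r - 5) = 0" and "2 \<le> r" and "\<chi> (r - 1) = 0"
  shows "zero_sum_solvable r k (r*k - 2*r + 1) \<chi>"
proof -
  define T where "T = 2*k + r - 5"
  have T: "T \<in> {1..r*k - 2*r + 1}"
    unfolding T_def using two_k_plus_r_minus_5_mem_range assms(3) .
  have two: "2 \<in> {1..r*k - 2*r + 1}"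
    using k_ge assms(3) unfolding range_bound_eq by auto
  have "r \<noteq> 3"
    using assms(1,4) by auto
  with assms(3) consider "r = 2" | "4 \<le> r"
    by linarith
  then show ?thesis
  proof cases
    case 1
    then have "even (k - 2)"
      using r_dvd_k k_ge by auto
    show ?thesis
    proof (rule zero_sum_solvable_padded_by_ones[of "k - 2" 0 k 2 _ 1 T])
      show "T = (k - 2) * 2 + 0 * 1 + (k - 1 - (k - 2) - 0)"
        using k_ge 1 unfolding T_def by linarith
      show "((k - 2) * \<chi> 2 + 0 * \<chi> 1 + \<chi> T) mod r = 0"
        using 1 assms(1,2) \<open>even (k - 2)\<close> unfolding T_def by simp
    qed (use T two k_ge 1 chi_1 in auto)
  next
    case 2
    have "(k - r) mod r = 0"
      using r_dvd_k by (simp add: dvd_diff_nat)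
    have "r - 1 \<in> {1..r*k - 2*r + 1}"
      using pred_k_mem_range k_ge 2 by auto
    show ?thesis
    proof (rule zero_sum_solvable_padded_by_ones[of 2 "k - r" k "r - 1" _ 2 T])
      show "T = 2 * (r - 1) + (k - r) * 2 + (k - 1 - 2 - (k - r))"
        using k_ge 2 unfolding T_def by linarith
      show "(2 * \<chi> (r - 1) + (k - r) * \<chi> 2 + \<chi> T) mod r = 0"
        using assms(1,2,4) \<open>(k - r) mod r = 0\<close> unfolding T_def by simp
    qed (use T two k_ge 2 chi_1 \<open>r - 1 \<in> {1..r*k - 2*r + 1}\<close> in auto)
  qed
qed

lemma zero_sum_solvable_if_chi_2:
  assumes "\<chi> 2 = 1" and "\<chi> (k - 1) = 1" and "2 \<le> r" and "\<chi> (r - 1) = 0"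
  shows "zero_sum_solvable r k (r*k - 2*r + 1) \<chi>"
proof (cases "\<chi> (2*k + r - 5) = 0")
  case True
  show ?thesis
    using assms(1) True assms(3,4) by (rule zero_sum_solvable_if_chi_2_and_chi_0)
next
  case False
  define T where "T = 2*k + r - 5"
  have T: "T \<in> {1..r*k - 2*r + 1}"
    unfolding T_def using two_k_plus_r_minus_5_mem_range assms(3) .
  then have "\<chi> T = 1"
    using chi_binary[OF T] False unfolding T_def by auto
  have "Suc (Suc (r - 2)) = r"
    using assms(3) by simp
  then have colors: "(1 * \<chi> (k - 1) + (r - 2) * \<chi> 2 + \<chi> T) mod r = 0"
    using \<open>\<chi> T = 1\<close> assms(1,2) by simp
  show ?thesis
  proof (rule zero_sum_solvable_padded_by_ones[OF _ _ _ T _ chi_1 colors])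
    show "T = 1 * (k - 1) + (r - 2) * 2 + (k - 1 - 1 - (r - 2))"
      using k_ge assms(3) unfolding T_def by linarith
  qed (use pred_k_mem_range k_ge assms(3) in \<open>auto simp: range_bound_eq\<close>)
qed

lemma zero_sum_solvable_if_chi_pred_k_eq_1:
  assumes "\<chi> (k - 1) = 1" and "2 \<le> r" and "\<chi> (r - 1) = 0"
  shows "zero_sum_solvable r k (r*k - 2*r + 1) \<chi>"
proof -
  obtain t where t: "1 \<le> t" "\<chi> t \<noteq> 0" and below_t: "\<And>v. 1 \<le> v \<Longrightarrow> v < t \<Longrightarrow> \<chi> v = 0"
    using exists_least_iff[of "\<lambda>v. 1 \<le> v \<and> \<chi> v \<noteq> 0"] pred_k_mem_range assms(1)
    by (metis atLeastAtMost_iff zero_neq_one)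
  have "t \<le> k - 1"
    using below_t[of "k - 1"] pred_k_mem_range assms(1) by fastforce
  then have "\<chi> t = 1"
    using t chi_binary[of t] pred_k_mem_range by auto
  show ?thesis
  proof (cases "3 \<le> t")
    case True
    then show ?thesis
      using \<open>t \<le> k - 1\<close> \<open>\<chi> t = 1\<close> below_t by (rule zero_sum_solvable_if_least_nonzero_ge_3)
  next
    case False
    then have "t = 2"
      using t chi_1 by (cases "t = 1") auto
    with \<open>\<chi> t = 1\<close> have "\<chi> 2 = 1"
      by simp
    then show ?thesis
      using assms by (rule zero_sum_solvable_if_chi_2)
  qed
qed

end

theorem lemma1:
  fixes k r :: nat and \<chi> :: "nat \<Rightarrow> nat"
  assumes "0 < k" and "0 < r" and "r dvd k" and "k \<ge> 2 * r"
    and "\<forall>n\<in>{1..r*k - 2*r + 1}. \<chi> n \<in> {0, 1}"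
    and "\<chi> 1 = 0"
    and "r \<ge> 2 \<longrightarrow> \<chi> (r - 1) = 0"
  shows "\<exists>x :: nat \<Rightarrow> nat.
           (\<forall>i\<in>{1..k}. x i \<in> {1..r*k - 2*r + 1})
         \<and> (\<Sum>i=1..k-1. x i) = x k
         \<and> (\<Sum>i=1..k. \<chi> (x i)) mod r = 0"
proof -
  note coloring = assms(2-6)
  have "zero_sum_solvable r k (r*k - 2*r + 1) \<chi>"
  proof (cases "r dvd \<chi> (k - 1)")
    case True
    then show ?thesis
      by (rule zero_sum_solvable_if_dvd_chi_pred_k[OF coloring])
  next
    case False
    then have "\<chi> (k - 1) = 1"
      using chi_binary[OF coloring pred_k_mem_range[OF coloring]] by auto
    moreover from False have "2 \<le> r"
      using assms(2) by (cases "r = 1") auto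
    ultimately show ?thesis
      using assms(7) by (intro zero_sum_solvable_if_chi_pred_k_eq_1[OF coloring]) auto
  qed
  then show ?thesis
    unfolding zero_sum_solvable_def .
qed

end
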